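(* For any tree $T$, there exists a non-empty elementary minor of $T$ with the same spectator floor as $T$ if and only if there exists an edge $e$ of $T$ such that contracting $e$ reduces the diameter of $T$.
   Context: All graphs are finite, have no loops, and may have multiple (parallel) edges. A minor of $H$ is any graph obtained from $H$ by a sequence of: deleting an isolated vertex, deleting an edge, contracting an edge that has no edge parallel to it; an elementary minor is one obtained by exactly one such operation. A unique shortest path is a shortest $u$–$v$ path $P$ such that every $u$–$v$ path with the same number of vertices is identical to $P$, where two paths with different edge sequences are different even if their vertex sequences agree; a single vertex is a unique shortest path. The parade number $\mathrm{usp}(G)$ is the largest number of vertices of a unique shortest path in $G$. The spectator number is $\mathrm{sp}(G)=|V(G)|-\mathrm{usp}(G)$. The spectator floor $\lfloor \mathrm{sp}\rfloor(G)$ is the minimum of $\mathrm{sp}(H)$ over all graphs $H$ of which $G$ is a minor. *)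

theory Defs
  imports Main
begin

text \<open>Vertices and edge identifiers are natural
numbers; every finite graph is isomorphic to one of this form. Each edge has a
2-element set of ends (no loops); parallel edges are allowed.\<close>

record mgraph =
  verts :: "nat set"
  edges :: "nat set"
  ends  :: "nat \<Rightarrow> nat set"

definition wf_graph :: "mgraph \<Rightarrow> bool" where
  "wf_graph G \<longleftrightarrow> finite (verts G) \<and> finite (edges G) \<and>
     (\<forall>e\<in>edges G. ends G e \<subseteq> verts G \<and> card (ends G e) = 2)"

definition is_path :: "mgraph \<Rightarrow> nat list \<Rightarrow> nat list \<Rightarrow> bool" where
  "is_path G vs es \<longleftrightarrow> vs \<noteq> [] \<and> distinct vs \<and> length vs = length es + 1 \<and>
     set vs \<subseteq> verts G \<and>
     (\<forall>i<length es. es ! i \<in> edges G \<and> ends G (es ! i) = {vs ! i, vs ! Suc i})"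

definition path_between :: "mgraph \<Rightarrow> nat \<Rightarrow> nat \<Rightarrow> nat list \<Rightarrow> nat list \<Rightarrow> bool" where
  "path_between G u v vs es \<longleftrightarrow> is_path G vs es \<and> hd vs = u \<and> last vs = v"

definition unique_shortest_path :: "mgraph \<Rightarrow> nat list \<Rightarrow> nat list \<Rightarrow> bool" where
  "unique_shortest_path G vs es \<longleftrightarrow> is_path G vs es \<and>
     (\<forall>vs' es'. path_between G (hd vs) (last vs) vs' es' \<longrightarrow> length vs \<le> length vs') \<and>
     (\<forall>vs' es'. path_between G (hd vs) (last vs) vs' es' \<and> length vs' = length vs
        \<longrightarrow> vs' = vs \<and> es' = es)"

definition usp :: "mgraph \<Rightarrow> nat" where
  "usp G = Sup {length vs | vs es. unique_shortest_path G vs es}"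

definition sp :: "mgraph \<Rightarrow> nat" where
  "sp G = card (verts G) - usp G"

definition del_vertex :: "mgraph \<Rightarrow> nat \<Rightarrow> mgraph" where
  "del_vertex G v = G\<lparr>verts := verts G - {v}\<rparr>"

definition del_edge :: "mgraph \<Rightarrow> nat \<Rightarrow> mgraph" where
  "del_edge G e = G\<lparr>edges := edges G - {e}\<rparr>"

definition contract :: "mgraph \<Rightarrow> nat \<Rightarrow> mgraph" where
  "contract G e = (let u = Min (ends G e); w = Max (ends G e) in
     \<lparr>verts = verts G - {w}, edges = edges G - {e},
      ends = (\<lambda>x. (\<lambda>y. if y = w then u else y) ` ends G x)\<rparr>)"

definition elem_minor :: "mgraph \<Rightarrow> mgraph \<Rightarrow> bool" where
  "elem_minor H G \<longleftrightarrow>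
     (\<exists>v\<in>verts G. (\<forall>e\<in>edges G. v \<notin> ends G e) \<and> H = del_vertex G v) \<or>
     (\<exists>e\<in>edges G. H = del_edge G e) \<or>
     (\<exists>e\<in>edges G. (\<forall>e'\<in>edges G. e' \<noteq> e \<longrightarrow> ends G e' \<noteq> ends G e) \<and> H = contract G e)"

definition graph_iso :: "mgraph \<Rightarrow> mgraph \<Rightarrow> bool" where
  "graph_iso G H \<longleftrightarrow> (\<exists>f g. bij_betw f (verts G) (verts H) \<and> bij_betw g (edges G) (edges H) \<and>
     (\<forall>e\<in>edges G. ends H (g e) = f ` ends G e))"

definition is_minor :: "mgraph \<Rightarrow> mgraph \<Rightarrow> bool" where
  "is_minor M G \<longleftrightarrow> (\<exists>M'. graph_iso M M' \<and> elem_minor\<^sup>*\<^sup>* M' G)"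

definition spfloor :: "mgraph \<Rightarrow> nat" where
  "spfloor G = (LEAST k. \<exists>H. wf_graph H \<and> is_minor G H \<and> sp H = k)"

definition connected_graph :: "mgraph \<Rightarrow> bool" where
  "connected_graph G \<longleftrightarrow> (\<forall>u\<in>verts G. \<forall>v\<in>verts G. \<exists>vs es. path_between G u v vs es)"

definition has_cycle :: "mgraph \<Rightarrow> bool" where
  "has_cycle G \<longleftrightarrow> (\<exists>vs es e. is_path G vs es \<and> 2 \<le> length vs \<and> e \<in> edges G \<and>
     e \<notin> set es \<and> ends G e = {hd vs, last vs})"

definition is_tree :: "mgraph \<Rightarrow> bool" where
  "is_tree G \<longleftrightarrow> wf_graph G \<and> verts G \<noteq> {} \<and> connected_graph G \<and> \<not> has_cycle G"

definition gdist :: "mgraph \<Rightarrow> nat \<Rightarrow> nat \<Rightarrow> nat" where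
  "gdist G u v = (LEAST k. \<exists>vs es. path_between G u v vs es \<and> length es = k)"

definition diameter :: "mgraph \<Rightarrow> nat" where
  "diameter G = Sup {gdist G u v | u v. u \<in> verts G \<and> v \<in> verts G}"

end

theory Submission
  imports Defs
begin

text \<open>Let T be a tree with n vertices and diameter D. A diametral path of T is its only path
  between its ends, so usp T \<ge> D + 1 and sp T \<le> n - D - 1. Conversely, if a connected graph
  with n vertices and diameter D is a minor of H, then H has a component K with
  d(s, t) + n \<le> |K| + D for all s, t in K: this holds for the minor itself and survives undoing
  each vertex deletion, edge deletion and contraction. Applied to the ends of a longest unique
  shortest path of H it gives sp H \<ge> n - D - 1. Hence the spectator floor of T is n - D - 1.

  Contracting an edge gives a tree on n - 1 vertices whose floor is at most sp T, so the floor is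
  kept exactly when the diameter drops. A tree has an isolated vertex only if it is a single
  vertex, whose deletion leaves the empty graph. Deleting an edge e never keeps the floor when no
  contraction shortens T: attach e instead between the ends of longest paths in the two
  components of T - e. The new graph has T - e as a minor, and its path through e is unique and
  has at least D + 2 vertices, because the diameter of T / e, which is at least D, is bounded by
  the sum of the two component diameters.\<close>

section \<open>Walks, components and paths\<close>

definition adj :: "mgraph \<Rightarrow> nat \<Rightarrow> nat \<Rightarrow> bool" where
  "adj G x y \<longleftrightarrow> x \<in> verts G \<and> y \<in> verts G \<and> (\<exists>e\<in>edges G. ends G e = {x, y})"

abbreviation reach :: "mgraph \<Rightarrow> nat \<Rightarrow> nat \<Rightarrow> bool" where
  "reach G \<equiv> (adj G)\<^sup>*\<^sup>*"

definition walk_dist :: "mgraph \<Rightarrow> nat \<Rightarrow> nat \<Rightarrow> nat" where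
  "walk_dist G x y = (LEAST n. (adj G ^^ n) x y)"

definition component :: "mgraph \<Rightarrow> nat \<Rightarrow> nat set" where
  "component G x = {y. reach G x y}"

lemma adj_sym: "adj G x y \<longleftrightarrow> adj G y x"
  unfolding adj_def by (auto simp: insert_commute)

lemma adj_in_verts: "adj G x y \<Longrightarrow> x \<in> verts G \<and> y \<in> verts G"
  unfolding adj_def by auto

lemma relpowp_adj_sym: "(adj G ^^ n) x y \<Longrightarrow> (adj G ^^ n) y x"
proof (induction n arbitrary: y)
  case 0
  then show ?case by simp
next
  case (Suc n)
  then obtain z where "(adj G ^^ n) x z" "adj G z y" by (auto elim: relpowp_Suc_E)
  then have "adj G y z" "(adj G ^^ n) z x" using Suc.IH adj_sym by auto
  then show ?case by (rule relpowp_Suc_I2)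
qed

lemma reach_sym: "reach G x y \<Longrightarrow> reach G y x"
  using relpowp_adj_sym rtranclp_power by metis

lemma reach_in_verts: "reach G x y \<Longrightarrow> x \<in> verts G \<Longrightarrow> y \<in> verts G"
  by (induction rule: rtranclp_induct) (auto dest: adj_in_verts)

lemma walk_dist_le: "(adj G ^^ n) x y \<Longrightarrow> walk_dist G x y \<le> n"
  unfolding walk_dist_def by (rule Least_le)

lemma relpowp_walk_dist: "reach G x y \<Longrightarrow> (adj G ^^ walk_dist G x y) x y"
  unfolding walk_dist_def rtranclp_power by (rule LeastI_ex)

lemma walk_dist_sym: "walk_dist G x y = walk_dist G y x"
proof -
  have "(\<lambda>n. (adj G ^^ n) x y) = (\<lambda>n. (adj G ^^ n) y x)"
    using relpowp_adj_sym by blast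
  then show ?thesis unfolding walk_dist_def by simp
qed

lemma walk_dist_self: "walk_dist G x x = 0"
  using walk_dist_le[of 0 G x x] by simp

lemma component_subset_verts: "x \<in> verts G \<Longrightarrow> component G x \<subseteq> verts G"
  unfolding component_def using reach_in_verts by auto

lemma finite_component: "finite (verts G) \<Longrightarrow> x \<in> verts G \<Longrightarrow> finite (component G x)"
  using component_subset_verts finite_subset by blast

lemma component_eq: "reach G x y \<Longrightarrow> component G x = component G y"
  unfolding component_def using reach_sym rtranclp_trans[of "adj G"] by blast

lemma component_disjoint: "\<not> reach G x y \<Longrightarrow> component G x \<inter> component G y = {}"
  unfolding component_def using reach_sym rtranclp_trans[of "adj G"] by blast

lemma path_walk:
  assumes p: "is_path G vs es"
  shows "i < length vs \<Longrightarrow> (adj G ^^ i) (hd vs) (vs ! i)"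
proof (induction i)
  case 0
  then show ?case using p unfolding is_path_def by (simp add: hd_conv_nth)
next
  case (Suc i)
  have "i < length es" using Suc.prems p unfolding is_path_def by simp
  then have "adj G (vs ! i) (vs ! Suc i)"
    using p Suc.prems unfolding is_path_def adj_def by (auto intro!: nth_mem)
  then show ?case using Suc by (auto intro: relpowp_Suc_I)
qed

lemma path_walk_last: "is_path G vs es \<Longrightarrow> (adj G ^^ length es) (hd vs) (last vs)"
  using path_walk[of G vs es "length es"] unfolding is_path_def by (simp add: last_conv_nth)

lemma path_reach:
  assumes "is_path G vs es" and "v \<in> set vs"
  shows "reach G (hd vs) v"
proof -
  obtain i where "i < length vs" "v = vs ! i" using assms(2) by (auto simp: in_set_conv_nth)
  then show ?thesis using path_walk[OF assms(1)] by (auto intro: relpowp_imp_rtranclp)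
qed

lemma path_reach_last: "is_path G vs es \<Longrightarrow> reach G (hd vs) (last vs)"
  by (rule relpowp_imp_rtranclp[OF path_walk_last])

lemma walk_dist_le_path_length: "path_between G x y vs es \<Longrightarrow> walk_dist G x y \<le> length es"
  unfolding path_between_def using path_walk_last walk_dist_le by metis

lemma path_singleton: "x \<in> verts G \<Longrightarrow> is_path G [x] []"
  unfolding is_path_def by simp

lemma path_same_ends:
  assumes p: "is_path G vs es" and h: "hd vs = last vs"
  shows "vs = [hd vs] \<and> es = []"
proof -
  have "distinct vs" "vs \<noteq> []" "length vs = length es + 1" using p unfolding is_path_def by auto
  moreover have "hd xs \<noteq> last xs" if "distinct xs" "2 \<le> length xs" for xs :: "nat list"
    using that by (cases xs) (auto simp: last_conv_nth)
  ultimately have "\<not> 2 \<le> length vs" using h by blast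
  then show ?thesis using \<open>vs \<noteq> []\<close> \<open>length vs = length es + 1\<close>
    by (cases vs) (auto simp: Suc_le_eq)
qed

lemma path_take:
  assumes p: "is_path G vs es" and i: "i < length vs"
  shows "is_path G (take (Suc i) vs) (take i es)"
  using p i unfolding is_path_def by (auto dest: in_set_takeD)

lemma path_drop:
  assumes p: "is_path G vs es" and i: "i < length es"
  shows "is_path G (drop (Suc i) vs) (drop (Suc i) es)"
  using p i unfolding is_path_def by (auto dest: in_set_dropD)

lemma path_append:
  assumes p1: "is_path G vs1 es1" and p2: "is_path G vs2 es2"
    and disj: "set vs1 \<inter> set vs2 = {}"
    and e: "e \<in> edges G" "ends G e = {last vs1, hd vs2}"
  shows "is_path G (vs1 @ vs2) (es1 @ e # es2)"
  unfolding is_path_def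
proof (intro conjI allI impI)
  have len: "length vs1 = length es1 + 1" "length vs2 = length es2 + 1"
    and ne: "vs1 \<noteq> []" "vs2 \<noteq> []"
    using p1 p2 unfolding is_path_def by auto
  show "vs1 @ vs2 \<noteq> []" "length (vs1 @ vs2) = length (es1 @ e # es2) + 1"
    using ne len by auto
  show "distinct (vs1 @ vs2)" "set (vs1 @ vs2) \<subseteq> verts G"
    using p1 p2 disj unfolding is_path_def by auto
  fix i assume i: "i < length (es1 @ e # es2)"
  consider "i < length es1" | "i = length es1" | k where "i = Suc (length es1 + k)" "k < length es2"
  proof (cases "length es1 < i")
    case True
    then obtain k where "i = Suc (length es1 + k)" using less_imp_Suc_add by blast
    then show ?thesis using i that(3) by simp
  qed (use that in linarith)
  then have "(es1 @ e # es2) ! i \<in> edges G \<and>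
    ends G ((es1 @ e # es2) ! i) = {(vs1 @ vs2) ! i, (vs1 @ vs2) ! Suc i}"
  proof cases
    case 1
    then show ?thesis using p1 len unfolding is_path_def by (simp add: nth_append)
  next
    case 2
    then show ?thesis using e len ne by (simp add: nth_append last_conv_nth hd_conv_nth)
  next
    case 3
    then show ?thesis using p2 len unfolding is_path_def by (simp add: nth_append)
  qed
  then show "(es1 @ e # es2) ! i \<in> edges G"
    "ends G ((es1 @ e # es2) ! i) = {(vs1 @ vs2) ! i, (vs1 @ vs2) ! Suc i}" by auto
qed

lemma path_distinct_edges:
  assumes p: "is_path G vs es"
  shows "distinct es"
proof -
  have ends: "ends G (es ! i) = {vs ! i, vs ! Suc i}" if "i < length es" for i
    using p that unfolding is_path_def by blast
  have neq: "es ! i \<noteq> es ! j" if ij: "i < j" "j < length es" for i j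
  proof
    assume "es ! i = es ! j"
    moreover have "i < length es" using ij by simp
    ultimately have "{vs ! i, vs ! Suc i} = {vs ! j, vs ! Suc j}" using ends ij(2) by metis
    moreover have "vs ! i \<noteq> vs ! j" "vs ! i \<noteq> vs ! Suc j"
      using p ij unfolding is_path_def by (auto simp: nth_eq_iff_index_eq)
    ultimately show False by (auto simp: doubleton_eq_iff)
  qed
  show ?thesis unfolding distinct_conv_nth
  proof (intro allI impI)
    fix i j assume "i < length es" "j < length es" "i \<noteq> j"
    then show "es ! i \<noteq> es ! j" using neq[of i j] neq[of j i] by (cases "i < j") auto
  qed
qed

lemma walk_imp_path:
  assumes x: "x \<in> verts G"
  shows "(adj G ^^ n) x y \<Longrightarrow> \<exists>vs es. path_between G x y vs es \<and> length es \<le> n"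
proof (induction n arbitrary: y)
  case 0
  then show ?case using x path_singleton unfolding path_between_def by fastforce
next
  case (Suc n)
  then obtain z where "(adj G ^^ n) x z" and zy: "adj G z y" by (auto elim: relpowp_Suc_E)
  with Suc.IH obtain vs es where p: "is_path G vs es" "hd vs = x" "last vs = z"
    and len: "length es \<le> n"
    unfolding path_between_def by blast
  show ?case
  proof (cases "y \<in> set vs")
    case True
    then obtain j where j: "j < length vs" "vs ! j = y" by (auto simp: in_set_conv_nth)
    have "vs \<noteq> []" using p unfolding is_path_def by simp
    then have "hd (take (Suc j) vs) = x" using p(2) by (cases vs) auto
    moreover have "last (take (Suc j) vs) = y" using j by (simp add: take_Suc_conv_app_nth)
    ultimately have "path_between G x y (take (Suc j) vs) (take j es)"
      using path_take[OF p(1) j(1)] unfolding path_between_def by simp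
    then show ?thesis using len by fastforce
  next
    case False
    from zy obtain e where e: "e \<in> edges G" "ends G e = {z, y}" and y: "y \<in> verts G"
      unfolding adj_def by blast
    have "is_path G (vs @ [y]) (es @ [e])"
      using path_append[OF p(1) path_singleton[OF y]] False e p(3) by auto
    moreover have "vs \<noteq> []" using p(1) unfolding is_path_def by simp
    ultimately have "path_between G x y (vs @ [y]) (es @ [e])"
      using p(2) unfolding path_between_def by simp
    then show ?thesis using len by fastforce
  qed
qed

lemma walk_dist_less_card_component:
  assumes fin: "finite (verts G)" and x: "x \<in> verts G" and xy: "reach G x y"
  shows "walk_dist G x y < card (component G x)"
proof -
  obtain vs es where p: "path_between G x y vs es" and len: "length es \<le> walk_dist G x y"
    using walk_imp_path[OF x relpowp_walk_dist[OF xy]] by blast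
  have path: "is_path G vs es" "hd vs = x" using p unfolding path_between_def by auto
  have "walk_dist G x y < length vs"
    using path(1) len walk_dist_le_path_length[OF p] unfolding is_path_def by simp
  also have "\<dots> = card (set vs)"
    using path(1) unfolding is_path_def by (simp add: distinct_card)
  also have "\<dots> \<le> card (component G x)"
  proof (rule card_mono[OF finite_component[OF fin x]])
    show "set vs \<subseteq> component G x"
      using path_reach[OF path(1)] path(2) unfolding component_def by blast
  qed
  finally show ?thesis .
qed

lemma gdist_eq_walk_dist:
  assumes x: "x \<in> verts G"
  shows "gdist G x y = walk_dist G x y"
proof (cases "reach G x y")
  case True
  obtain vs es where p: "path_between G x y vs es" "length es \<le> walk_dist G x y"
    using walk_imp_path[OF x relpowp_walk_dist[OF True]] by blast
  show ?thesis
    unfolding gdist_def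
  proof (rule Least_equality)
    have "length es = walk_dist G x y" using p walk_dist_le_path_length[OF p(1)] by simp
    then show "\<exists>vs es. path_between G x y vs es \<and> length es = walk_dist G x y"
      using p(1) by blast
    show "walk_dist G x y \<le> k" if "\<exists>vs es. path_between G x y vs es \<and> length es = k" for k
      using that walk_dist_le_path_length by blast
  qed
next
  case False
  then have "\<not> path_between G x y vs es" for vs es
    using path_reach_last unfolding path_between_def by blast
  moreover have "\<not> (adj G ^^ n) x y" for n
    using False by (auto dest: relpowp_imp_rtranclp)
  ultimately show ?thesis unfolding gdist_def walk_dist_def by simp
qed

lemma diameter_walk_dist:
  "diameter G = Sup ((\<lambda>(u, v). walk_dist G u v) ` (verts G \<times> verts G))"
proof -
  have "{gdist G u v | u v. u \<in> verts G \<and> v \<in> verts G} =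
      (\<lambda>(u, v). gdist G u v) ` (verts G \<times> verts G)"
    by auto
  also have "\<dots> = (\<lambda>(u, v). walk_dist G u v) ` (verts G \<times> verts G)"
    by (rule image_cong) (auto simp: gdist_eq_walk_dist)
  finally show ?thesis unfolding diameter_def by simp
qed

lemma walk_dist_le_diameter:
  "finite (verts G) \<Longrightarrow> u \<in> verts G \<Longrightarrow> v \<in> verts G \<Longrightarrow> walk_dist G u v \<le> diameter G"
  unfolding diameter_walk_dist by (rule le_cSup_finite) auto

lemma diameter_le:
  "verts G \<noteq> {} \<Longrightarrow> (\<And>u v. u \<in> verts G \<Longrightarrow> v \<in> verts G \<Longrightarrow> walk_dist G u v \<le> B)
    \<Longrightarrow> diameter G \<le> B"
  unfolding diameter_walk_dist by (rule cSup_least) auto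

lemma diameter_attained:
  assumes "finite (verts G)" "verts G \<noteq> {}"
  shows "\<exists>u\<in>verts G. \<exists>v\<in>verts G. diameter G = walk_dist G u v"
proof -
  let ?D = "(\<lambda>(u, v). walk_dist G u v) ` (verts G \<times> verts G)"
  have "Max ?D \<in> ?D" using assms by (intro Max_in) auto
  moreover have "diameter G = Max ?D"
    unfolding diameter_walk_dist using assms by (intro cSup_eq_Max) auto
  ultimately show ?thesis by auto
qed

section \<open>Unique shortest paths\<close>

lemma usp_length_le_card:
  "finite (verts G) \<Longrightarrow> unique_shortest_path G vs es \<Longrightarrow> length vs \<le> card (verts G)"
  unfolding unique_shortest_path_def is_path_def by (metis card_mono distinct_card)

lemma finite_usp_lengths:
  "finite (verts G) \<Longrightarrow> finite {length vs | vs es. unique_shortest_path G vs es}"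
  by (rule finite_subset[of _ "{..card (verts G)}"]) (auto dest: usp_length_le_card)

lemma usp_le_card:
  assumes "finite (verts G)"
  shows "usp G \<le> card (verts G)"
  unfolding usp_def Sup_nat_def using finite_usp_lengths[OF assms] usp_length_le_card[OF assms]
  by (auto intro: Max.boundedI)

lemma length_le_usp:
  assumes "finite (verts G)" and "unique_shortest_path G vs es"
  shows "length vs \<le> usp G"
proof -
  have "length vs \<in> {length vs | vs es. unique_shortest_path G vs es}" using assms(2) by blast
  then show ?thesis unfolding usp_def by (rule le_cSup_finite[OF finite_usp_lengths[OF assms(1)]])
qed

lemma unique_path_imp_usp:
  assumes "is_path G vs es"
    and "\<And>vs' es'. path_between G (hd vs) (last vs) vs' es' \<Longrightarrow> vs' = vs \<and> es' = es"
  shows "unique_shortest_path G vs es"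
  unfolding unique_shortest_path_def
proof (intro conjI allI impI)
  fix vs' es' assume "path_between G (hd vs) (last vs) vs' es'"
  then have "vs' = vs" using assms(2) by blast
  then show "length vs \<le> length vs'" by simp
qed (use assms in auto)

lemma usp_attained:
  assumes fin: "finite (verts G)" and x: "x \<in> verts G"
  shows "\<exists>vs es. unique_shortest_path G vs es \<and> usp G = length vs"
proof -
  let ?L = "{length vs | vs es. unique_shortest_path G vs es}"
  have "unique_shortest_path G [x] []"
  proof (rule unique_path_imp_usp)
    show "is_path G [x] []" using x by (rule path_singleton)
    fix vs' es' assume "path_between G (hd [x]) (last [x]) vs' es'"
    then show "vs' = [x] \<and> es' = []" using path_same_ends unfolding path_between_def by fastforce
  qed
  then have "?L \<noteq> {}" by blast
  then have "Max ?L \<in> ?L" using finite_usp_lengths[OF fin] by (intro Max_in)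
  moreover have "usp G = Max ?L"
    unfolding usp_def using finite_usp_lengths[OF fin] \<open>?L \<noteq> {}\<close> by (rule cSup_eq_Max)
  ultimately have "usp G \<in> ?L" by simp
  then show ?thesis by auto
qed

section \<open>Forests\<close>

text \<open>Every edge is a bridge. For loopless multigraphs this is equivalent to having no cycle,
  and unlike the absence of cycles it is visibly preserved by contraction.\<close>

definition forest :: "mgraph \<Rightarrow> bool" where
  "forest G \<longleftrightarrow> (\<forall>e\<in>edges G. \<forall>a b. ends G e = {a, b} \<longrightarrow> \<not> reach (del_edge G e) a b)"

lemma del_edge_simps [simp]:
  "verts (del_edge G e) = verts G" "edges (del_edge G e) = edges G - {e}"
  "ends (del_edge G e) = ends G"
  unfolding del_edge_def by simp_all

lemma wf_del_edge: "wf_graph G \<Longrightarrow> wf_graph (del_edge G e)"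
  unfolding wf_graph_def by auto

lemma adj_del_edgeD: "adj (del_edge G e) x y \<Longrightarrow> adj G x y"
  unfolding adj_def by auto

lemma adj_del_edge_cases: "adj G x y \<Longrightarrow> adj (del_edge G e) x y \<or> ends G e = {x, y}"
  unfolding adj_def by auto

lemma relpowp_del_edgeD: "(adj (del_edge G e) ^^ n) x y \<Longrightarrow> (adj G ^^ n) x y"
  by (rule relpowp_mono[OF adj_del_edgeD])

lemma reach_del_edgeD: "reach (del_edge G e) x y \<Longrightarrow> reach G x y"
  by (induction rule: rtranclp_induct) (auto dest: adj_del_edgeD intro: rtranclp.rtrancl_into_rtrancl)

lemma path_del_edge_iff: "is_path (del_edge G e) vs es \<longleftrightarrow> is_path G vs es \<and> e \<notin> set es"
  unfolding is_path_def by (auto simp: in_set_conv_nth)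

lemma path_avoids_edge:
  assumes p: "is_path G vs es" and x: "x \<notin> set vs" "x \<in> ends G e"
  shows "e \<notin> set es"
proof
  assume "e \<in> set es"
  then obtain i where i: "i < length es" "es ! i = e" by (auto simp: in_set_conv_nth)
  then have "ends G e = {vs ! i, vs ! Suc i}" "Suc i < length vs"
    using p unfolding is_path_def by auto
  then show False using x by (auto dest: nth_mem)
qed

lemma path_split_at_edge:
  assumes p: "is_path G vs es" and i: "i < length es"
  shows "is_path (del_edge G (es ! i)) (take (Suc i) vs) (take i es)"
    and "is_path (del_edge G (es ! i)) (drop (Suc i) vs) (drop (Suc i) es)"
    and "ends G (es ! i) = {last (take (Suc i) vs), hd (drop (Suc i) vs)}"
proof -
  have len: "length vs = length es + 1" using p unfolding is_path_def by simp
  have "distinct (take i es @ es ! i # drop (Suc i) es)"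
    using path_distinct_edges[OF p] id_take_nth_drop[OF i] by metis
  then have "es ! i \<notin> set (take i es)" "es ! i \<notin> set (drop (Suc i) es)" by auto
  then show "is_path (del_edge G (es ! i)) (take (Suc i) vs) (take i es)"
    "is_path (del_edge G (es ! i)) (drop (Suc i) vs) (drop (Suc i) es)"
    using path_take[OF p] path_drop[OF p i] len i path_del_edge_iff by auto
  have "last (take (Suc i) vs) = vs ! i" "hd (drop (Suc i) vs) = vs ! Suc i"
    using len i by (simp_all add: take_Suc_conv_app_nth hd_drop_conv_nth)
  then show "ends G (es ! i) = {last (take (Suc i) vs), hd (drop (Suc i) vs)}"
    using p i unfolding is_path_def by simp
qed

lemma reach_del_edge_cases:
  assumes "reach G x y"
  shows "reach (del_edge G e) x y \<or>
    (\<exists>p q. {p, q} = ends G e \<and> reach (del_edge G e) x p \<and> reach (del_edge G e) q y)"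
  using assms
proof (induction rule: rtranclp_induct)
  case base
  then show ?case by simp
next
  case (step y z)
  let ?H = "del_edge G e"
  consider (kept) "adj ?H y z" | (deleted) "ends G e = {y, z}"
    using adj_del_edge_cases[OF step(2)] by blast
  then show ?case
  proof cases
    case kept
    then show ?thesis using step(3) rtranclp.rtrancl_into_rtrancl[of "adj ?H"] by blast
  next
    case deleted
    show ?thesis
    proof (cases "reach ?H x y")
      case True
      then show ?thesis using deleted by blast
    next
      case False
      then obtain p where "p \<in> {y, z}" "reach ?H x p" using step(3) deleted by auto
      then show ?thesis using False by auto
    qed
  qed
qed

lemma acyclic_imp_forest:
  assumes wf: "wf_graph G" and acyclic: "\<not> has_cycle G"
  shows "forest G"
  unfolding forest_def
proof (intro ballI allI impI notI)
  fix e a b assume e: "e \<in> edges G" and ab: "ends G e = {a, b}" and r: "reach (del_edge G e) a b"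
  have "card {a, b} = 2" "a \<in> verts G" using wf e ab unfolding wf_graph_def by auto
  then have "a \<noteq> b" "a \<in> verts (del_edge G e)" by auto
  obtain vs es where "path_between (del_edge G e) a b vs es"
    using walk_imp_path[OF \<open>a \<in> verts (del_edge G e)\<close>] r rtranclp_power by metis
  then have ip: "is_path G vs es" "e \<notin> set es" "hd vs = a" "last vs = b"
    using path_del_edge_iff unfolding path_between_def by auto
  have "2 \<le> length vs"
  proof (rule ccontr)
    assume "\<not> 2 \<le> length vs"
    moreover have "vs \<noteq> []" using ip(1) unfolding is_path_def by simp
    ultimately have "length vs = 1" by (cases vs) (auto simp: Suc_le_eq)
    then show False using ip(3,4) \<open>a \<noteq> b\<close> by (cases vs) auto
  qed
  then have "has_cycle G" unfolding has_cycle_def using ip e ab by blast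
  then show False using acyclic by simp
qed

lemma forest_no_parallel:
  assumes wf: "wf_graph G" and forest: "forest G" and e: "e \<in> edges G" "e' \<in> edges G" "e' \<noteq> e"
  shows "ends G e' \<noteq> ends G e"
proof
  assume eq: "ends G e' = ends G e"
  obtain a b where ab: "ends G e = {a, b}" using wf e unfolding wf_graph_def by (metis card_2_iff)
  have "{a, b} \<subseteq> verts G" using wf e ab unfolding wf_graph_def by auto
  then have "adj (del_edge G e) a b" using e eq ab unfolding adj_def by auto
  then show False using forest e ab unfolding forest_def by blast
qed

lemma path_ConsD:
  assumes p: "is_path G (x # vs) (e # es)"
  shows "is_path G vs es" "e \<in> edges G" "ends G e = {x, hd vs}" "x \<notin> set vs" "vs \<noteq> []"
proof -
  show "vs \<noteq> []" "is_path G vs es" "x \<notin> set vs" using p unfolding is_path_def by auto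
  then show "e \<in> edges G" "ends G e = {x, hd vs}"
    using p unfolding is_path_def by (auto simp: hd_conv_nth)
qed

lemma forest_path_unique:
  assumes forest: "forest G"
  shows "is_path G vs es \<Longrightarrow> is_path G vs' es' \<Longrightarrow> hd vs = hd vs' \<Longrightarrow> last vs = last vs'
    \<Longrightarrow> vs = vs' \<and> es = es'"
proof (induction vs arbitrary: es vs' es')
  case Nil
  then show ?case unfolding is_path_def by simp
next
  case (Cons x vs)
  show ?case
  proof (cases es)
    case Nil
    then have "vs = []" using Cons.prems(1) unfolding is_path_def by simp
    then show ?thesis using path_same_ends[OF Cons.prems(2)] Cons.prems Nil by simp
  next
    case (Cons e es1)
    note P = path_ConsD[OF Cons.prems(1)[unfolded Cons]]
    obtain vs1' where vs': "vs' = x # vs1'"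
      using Cons.prems(2,3) unfolding is_path_def by (cases vs') auto
    have "vs1' \<noteq> []"
      using Cons.prems(4) P(4,5) vs' by (auto dest: last_in_set)
    then obtain f es1' where es': "es' = f # es1'"
      using Cons.prems(2) vs' unfolding is_path_def by (cases es') auto
    note P' = path_ConsD[OF Cons.prems(2)[unfolded vs' es']]
    have last: "last vs1' = last vs" using Cons.prems(4) vs' P(5) \<open>vs1' \<noteq> []\<close> by simp
    have "f = e"
    proof (rule ccontr)
      assume "f \<noteq> e"
      let ?H = "del_edge G e"
      have "is_path ?H vs es1" "is_path ?H vs1' es1'"
        using P P' path_avoids_edge path_del_edge_iff by (metis insertI1)+
      then have "reach ?H (hd vs) (last vs)" "reach ?H (hd vs1') (last vs1')"
        by (auto intro: path_reach_last)
      moreover have "x \<in> verts G" using Cons.prems(1) unfolding is_path_def by simp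
      then have "adj ?H x (hd vs1')"
        using P'(1-3) \<open>f \<noteq> e\<close> \<open>vs1' \<noteq> []\<close> unfolding adj_def is_path_def by auto
      ultimately have "reach ?H x (hd vs)"
        using last reach_sym rtranclp_trans[of "adj ?H"] by (metis r_into_rtranclp)
      then show False using forest P(2,3) unfolding forest_def by blast
    qed
    then have "hd vs1' = hd vs"
      using P(3) P'(3) P'(4) \<open>vs1' \<noteq> []\<close> by (auto simp: doubleton_eq_iff dest: hd_in_set)
    then have "vs = vs1' \<and> es1 = es1'" using Cons.IH[OF P(1) P'(1)] last by simp
    then show ?thesis using vs' es' \<open>f = e\<close> Cons by simp
  qed
qed

definition connected_forest :: "mgraph \<Rightarrow> bool" where
  "connected_forest G \<longleftrightarrow> wf_graph G \<and> verts G \<noteq> {} \<and> forest G \<and>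
     (\<forall>a\<in>verts G. \<forall>b\<in>verts G. reach G a b)"

lemma is_tree_imp_connected_forest: "is_tree T \<Longrightarrow> connected_forest T"
  unfolding is_tree_def connected_forest_def connected_graph_def path_between_def
  using acyclic_imp_forest path_reach_last by metis

lemma connected_forest_diameter_less_usp:
  assumes T: "connected_forest T"
  shows "diameter T < usp T"
proof -
  have fin: "finite (verts T)" using T unfolding connected_forest_def wf_graph_def by blast
  obtain a b where ab: "a \<in> verts T" "b \<in> verts T" "diameter T = walk_dist T a b"
    using diameter_attained[OF fin] T unfolding connected_forest_def by blast
  then have "reach T a b" using T unfolding connected_forest_def by blast
  then obtain vs es where p: "path_between T a b vs es" "length es \<le> walk_dist T a b"
    using walk_imp_path[OF ab(1) relpowp_walk_dist] by blast
  then have ip: "is_path T vs es" "hd vs = a" "last vs = b" unfolding path_between_def by auto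
  have "unique_shortest_path T vs es"
  proof (rule unique_path_imp_usp[OF ip(1)])
    fix vs' es' assume "path_between T (hd vs) (last vs) vs' es'"
    then have "is_path T vs' es'" "hd vs = hd vs'" "last vs = last vs'"
      unfolding path_between_def by auto
    then have "vs = vs' \<and> es = es'"
      using forest_path_unique[OF _ ip(1)] T unfolding connected_forest_def by blast
    then show "vs' = vs \<and> es' = es" by simp
  qed
  then have "length vs \<le> usp T" using length_le_usp fin by blast
  moreover have "walk_dist T a b \<le> length es" using walk_dist_le_path_length[OF p(1)] .
  ultimately show ?thesis using ab(3) ip(1) unfolding is_path_def by simp
qed

section \<open>Contraction\<close>

definition kept_end :: "mgraph \<Rightarrow> nat \<Rightarrow> nat" where
  "kept_end G e = Min (ends G e)"

definition lost_end :: "mgraph \<Rightarrow> nat \<Rightarrow> nat" where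
  "lost_end G e = Max (ends G e)"

definition contract_map :: "mgraph \<Rightarrow> nat \<Rightarrow> nat \<Rightarrow> nat" where
  "contract_map G e y = (if y = lost_end G e then kept_end G e else y)"

lemma contract_simps [simp]:
  "verts (contract G e) = verts G - {lost_end G e}"
  "edges (contract G e) = edges G - {e}"
  "ends (contract G e) x = contract_map G e ` ends G x"
  unfolding contract_def Let_def kept_end_def lost_end_def contract_map_def by simp_all

lemma ends_kept_lost:
  assumes "wf_graph G" "e \<in> edges G"
  shows "ends G e = {kept_end G e, lost_end G e}" "kept_end G e \<noteq> lost_end G e"
    "kept_end G e \<in> verts G" "lost_end G e \<in> verts G"
proof -
  have "card (ends G e) = 2" and sub: "ends G e \<subseteq> verts G"
    using assms unfolding wf_graph_def by auto
  then obtain a b where ab: "ends G e = {a, b}" "a \<noteq> b" by (metis card_2_iff)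
  have "kept_end G e = min a b" "lost_end G e = max a b"
    unfolding kept_end_def lost_end_def ab by simp_all
  then show "ends G e = {kept_end G e, lost_end G e}" "kept_end G e \<noteq> lost_end G e"
    "kept_end G e \<in> verts G" "lost_end G e \<in> verts G"
    using ab sub by (auto simp: min_def max_def)
qed

lemma adj_kept_lost:
  "wf_graph G \<Longrightarrow> e \<in> edges G \<Longrightarrow> adj G (kept_end G e) (lost_end G e)"
  using ends_kept_lost[of G e] unfolding adj_def by auto

lemma contract_map_in_verts:
  "wf_graph G \<Longrightarrow> e \<in> edges G \<Longrightarrow> y \<in> verts G \<Longrightarrow> contract_map G e y \<in> verts (contract G e)"
  using ends_kept_lost[of G e] unfolding contract_map_def by auto

lemma reach_contract_map: "wf_graph G \<Longrightarrow> e \<in> edges G \<Longrightarrow> reach G y (contract_map G e y)"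
  using adj_kept_lost[of G e] adj_sym unfolding contract_map_def by auto

lemma card_verts_contract:
  assumes "wf_graph G" "e \<in> edges G"
  shows "card (verts (contract G e)) + 1 = card (verts G)"
proof -
  have "finite (verts G)" using assms(1) unfolding wf_graph_def by blast
  moreover have "lost_end G e \<in> verts G" using ends_kept_lost[OF assms] by blast
  ultimately have "card (verts G) > 0" by (auto simp: card_gt_0_iff)
  then show ?thesis using \<open>lost_end G e \<in> verts G\<close> by (simp add: card_Diff_singleton)
qed

lemma wf_contract:
  assumes wf: "wf_graph G" and e: "e \<in> edges G"
    and no_parallel: "\<forall>e'\<in>edges G. e' \<noteq> e \<longrightarrow> ends G e' \<noteq> ends G e"
  shows "wf_graph (contract G e)"
  unfolding wf_graph_def
proof (intro conjI ballI)
  show "finite (verts (contract G e))" "finite (edges (contract G e))"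
    using wf unfolding wf_graph_def by auto
  fix e' assume "e' \<in> edges (contract G e)"
  then have e': "e' \<in> edges G" "e' \<noteq> e" by auto
  have "card (ends G e') = 2" and sub: "ends G e' \<subseteq> verts G"
    using wf e' unfolding wf_graph_def by auto
  then obtain p q where pq: "ends G e' = {p, q}" "p \<noteq> q" by (metis card_2_iff)
  show "ends (contract G e) e' \<subseteq> verts (contract G e)"
    using sub contract_map_in_verts[OF wf e] by auto
  have "contract_map G e p \<noteq> contract_map G e q"
  proof
    assume "contract_map G e p = contract_map G e q"
    then have "ends G e' = ends G e"
      using pq ends_kept_lost[OF wf e] unfolding contract_map_def by (auto split: if_splits)
    then show False using no_parallel e' by blast
  qed
  then show "card (ends (contract G e) e') = 2" using pq by simp
qed

lemma adj_contractD:
  assumes wf: "wf_graph G" and e: "e \<in> edges G" and xy: "adj (contract G e) x y"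
  shows "adj G x y \<or> (x = kept_end G e \<and> adj G (lost_end G e) y) \<or>
    (y = kept_end G e \<and> adj G x (lost_end G e))"
proof -
  let ?u = "kept_end G e" and ?w = "lost_end G e"
  obtain e' where e': "e' \<in> edges G" "e' \<noteq> e" "contract_map G e ` ends G e' = {x, y}"
    using xy unfolding adj_def by auto
  have "card (ends G e') = 2" and sub: "ends G e' \<subseteq> verts G"
    using wf e' unfolding wf_graph_def by auto
  then obtain p q where pq: "ends G e' = {p, q}" "p \<noteq> q" by (metis card_2_iff)
  have adj_pq: "adj G p q" using e' pq sub unfolding adj_def by auto
  have image: "{contract_map G e p, contract_map G e q} = {x, y}" using e' pq by simp
  consider "p = ?w" | "q = ?w" | "p \<noteq> ?w" "q \<noteq> ?w" by blast
  then show ?thesis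
  proof cases
    case 1
    then have "{?u, q} = {x, y}" using image pq(2) unfolding contract_map_def by simp
    then show ?thesis using adj_pq adj_sym 1 by (auto simp: doubleton_eq_iff)
  next
    case 2
    then have "{p, ?u} = {x, y}" using image pq(2) unfolding contract_map_def by simp
    then show ?thesis using adj_pq adj_sym 2 by (auto simp: doubleton_eq_iff)
  next
    case 3
    then have "{p, q} = {x, y}" using image unfolding contract_map_def by simp
    then show ?thesis using adj_pq adj_sym by (auto simp: doubleton_eq_iff)
  qed
qed

lemma adj_contract_map:
  assumes wf: "wf_graph G" and e: "e \<in> edges G" and xy: "adj G x y"
  shows "adj (contract G e) (contract_map G e x) (contract_map G e y) \<or>
    contract_map G e x = contract_map G e y"
proof -
  obtain e' where e': "e' \<in> edges G" "ends G e' = {x, y}" and "x \<in> verts G" "y \<in> verts G"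
    using xy unfolding adj_def by auto
  show ?thesis
  proof (cases "e' = e")
    case True
    then have "{x, y} = {kept_end G e, lost_end G e}" using ends_kept_lost[OF wf e] e' by simp
    then show ?thesis unfolding contract_map_def by (auto simp: doubleton_eq_iff)
  next
    case False
    then have "e' \<in> edges (contract G e)"
      "ends (contract G e) e' = {contract_map G e x, contract_map G e y}"
      using e' by auto
    then show ?thesis using contract_map_in_verts[OF wf e] \<open>x \<in> verts G\<close> \<open>y \<in> verts G\<close>
      unfolding adj_def by blast
  qed
qed

lemma relpowp_contract_map:
  assumes wf: "wf_graph G" and e: "e \<in> edges G"
  shows "(adj G ^^ n) x y \<Longrightarrow>
    \<exists>m\<le>n. (adj (contract G e) ^^ m) (contract_map G e x) (contract_map G e y)"
proof (induction n arbitrary: y)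
  case 0
  then show ?case by simp
next
  case (Suc n)
  then obtain z where "(adj G ^^ n) x z" and zy: "adj G z y" by (auto elim: relpowp_Suc_E)
  with Suc.IH obtain m where m: "m \<le> n"
    "(adj (contract G e) ^^ m) (contract_map G e x) (contract_map G e z)" by blast
  from adj_contract_map[OF wf e zy] show ?case
  proof
    assume "adj (contract G e) (contract_map G e z) (contract_map G e y)"
    with m show ?thesis by (intro exI[of _ "Suc m"]) (auto intro: relpowp_Suc_I)
  next
    assume "contract_map G e z = contract_map G e y"
    with m show ?thesis by (intro exI[of _ m]) simp
  qed
qed

lemma reach_contract_mapI:
  "wf_graph G \<Longrightarrow> e \<in> edges G \<Longrightarrow> reach G x y \<Longrightarrow>
    reach (contract G e) (contract_map G e x) (contract_map G e y)"
  using relpowp_contract_map[of G e] rtranclp_power[of "adj G"] rtranclp_power[of "adj (contract G e)"]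
  by metis

lemma reach_contractD:
  assumes wf: "wf_graph G" and e: "e \<in> edges G"
  shows "reach (contract G e) x y \<Longrightarrow> reach G x y"
proof (induction rule: rtranclp_induct)
  case base
  then show ?case by simp
next
  case (step y z)
  have "adj G (kept_end G e) (lost_end G e)" "adj G (lost_end G e) (kept_end G e)"
    using adj_kept_lost[OF wf e] adj_sym by auto
  then have "reach G y z" using adj_contractD[OF wf e step(2)]
    by (metis converse_rtranclp_into_rtranclp r_into_rtranclp)
  then show ?case using step(3) rtranclp_trans[of "adj G"] by blast
qed

text \<open>The second alternative is a walk that enters the edge e at one end and leaves it at the
  other; the edge itself is not counted, so lifting costs at most one extra step.\<close>

lemma contract_walk_lift:
  assumes wf: "wf_graph G" and e: "e \<in> edges G"
  shows "(adj (contract G e) ^^ n) (contract_map G e x) y \<Longrightarrow>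
    (\<exists>m\<le>n. (adj G ^^ m) x y) \<or>
    (\<exists>n1 n2 z1 z2. z1 \<in> ends G e \<and> z2 \<in> ends G e \<and>
       (adj G ^^ n1) x z1 \<and> (adj G ^^ n2) z2 y \<and> n1 + n2 \<le> n)"
proof (induction n arbitrary: y)
  case 0
  let ?u = "kept_end G e" and ?w = "lost_end G e"
  have y: "y = contract_map G e x" using 0 by simp
  show ?case
  proof (cases "x = ?w")
    case True
    then have "(adj G ^^ 0) x ?w" "(adj G ^^ 0) ?u y" using y unfolding contract_map_def by auto
    moreover have "?u \<in> ends G e" "?w \<in> ends G e" using ends_kept_lost[OF wf e] by auto
    ultimately show ?thesis by blast
  next
    case False
    then have "(adj G ^^ 0) x y" using y unfolding contract_map_def by simp
    then show ?thesis by blast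
  qed
next
  case (Suc n)
  let ?u = "kept_end G e" and ?w = "lost_end G e"
  have ends: "?u \<in> ends G e" "?w \<in> ends G e" using ends_kept_lost[OF wf e] by auto
  from Suc.prems obtain z where z: "(adj (contract G e) ^^ n) (contract_map G e x) z"
    and zy: "adj (contract G e) z y" by (auto elim: relpowp_Suc_E)
  have step: "adj G z y \<or> (z = ?u \<and> adj G ?w y) \<or> (y = ?u \<and> adj G z ?w)"
    by (rule adj_contractD[OF wf e zy])
  from Suc.IH[OF z] show ?case
  proof (elim disjE exE conjE)
    fix m assume m: "m \<le> n" "(adj G ^^ m) x z"
    from step show ?thesis
    proof (elim disjE conjE)
      assume "adj G z y"
      with m show ?thesis by (intro disjI1 exI[of _ "Suc m"]) (auto intro: relpowp_Suc_I)
    next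
      assume "z = ?u" "adj G ?w y"
      with m ends show ?thesis
        by (intro disjI2 exI[of _ m] exI[of _ 1] exI[of _ ?u] exI[of _ ?w]) auto
    next
      assume "y = ?u" "adj G z ?w"
      with m ends show ?thesis
        by (intro disjI2 exI[of _ "Suc m"] exI[of _ 0] exI[of _ ?w] exI[of _ ?u])
          (auto intro: relpowp_Suc_I)
    qed
  next
    fix n1 n2 z1 z2 assume B: "z1 \<in> ends G e" "z2 \<in> ends G e" "(adj G ^^ n1) x z1"
      "(adj G ^^ n2) z2 z" "n1 + n2 \<le> n"
    from step show ?thesis
    proof (elim disjE conjE)
      assume "adj G z y"
      with B show ?thesis
        by (intro disjI2 exI[of _ n1] exI[of _ "Suc n2"] exI[of _ z1] exI[of _ z2])
          (auto intro: relpowp_Suc_I)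
    next
      assume "z = ?u" "adj G ?w y"
      with B ends show ?thesis
        by (intro disjI2 exI[of _ n1] exI[of _ 1] exI[of _ z1] exI[of _ ?w]) auto
    next
      assume "y = ?u"
      with B ends show ?thesis
        by (intro disjI2 exI[of _ n1] exI[of _ 0] exI[of _ z1] exI[of _ ?u]) auto
    qed
  qed
qed

lemma relpowp_between_ends:
  assumes "wf_graph G" "e \<in> edges G" "z1 \<in> ends G e" "z2 \<in> ends G e"
  shows "\<exists>j\<le>1. (adj G ^^ j) z1 z2"
proof (cases "z1 = z2")
  case False
  then have "adj G z1 z2"
    using assms ends_kept_lost[OF assms(1,2)] adj_kept_lost[OF assms(1,2)] adj_sym by auto
  then have "(adj G ^^ 1) z1 z2" unfolding relpowp_1 .
  then show ?thesis by blast
qed (intro exI[of _ 0], simp)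

lemma walk_dist_le_contract:
  assumes wf: "wf_graph G" and e: "e \<in> edges G" and s: "s \<in> verts G" and st: "reach G s t"
  shows "walk_dist G s t \<le> walk_dist (contract G e) (contract_map G e s) (contract_map G e t) + 1"
proof -
  let ?u = "kept_end G e" and ?w = "lost_end G e"
    and ?n = "walk_dist (contract G e) (contract_map G e s) (contract_map G e t)"
  have walk: "(adj (contract G e) ^^ ?n) (contract_map G e s) (contract_map G e t)"
    using relpowp_walk_dist reach_contract_mapI[OF wf e st] by blast
  have ends: "?u \<in> ends G e" "?w \<in> ends G e" "adj G ?u ?w"
    using ends_kept_lost[OF wf e] adj_kept_lost[OF wf e] by auto
  have t: "contract_map G e t = t \<or> (t = ?w \<and> contract_map G e t = ?u)"
    unfolding contract_map_def by auto
  have "\<exists>m\<le>?n + 1. (adj G ^^ m) s t"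
    using contract_walk_lift[OF wf e walk]
  proof (elim disjE exE conjE)
    fix m assume m: "m \<le> ?n" "(adj G ^^ m) s (contract_map G e t)"
    from t show ?thesis
    proof
      assume "contract_map G e t = t"
      with m show ?thesis by (intro exI[of _ m]) simp
    next
      assume "t = ?w \<and> contract_map G e t = ?u"
      with m ends(3) have "(adj G ^^ Suc m) s t" by (auto intro: relpowp_Suc_I)
      with m show ?thesis by (intro exI[of _ "Suc m"]) simp
    qed
  next
    fix n1 n2 z1 z2 assume B: "z1 \<in> ends G e" "z2 \<in> ends G e" "(adj G ^^ n1) s z1"
      "(adj G ^^ n2) z2 (contract_map G e t)" "n1 + n2 \<le> ?n"
    from t show ?thesis
    proof
      assume "contract_map G e t = t"
      obtain j where "j \<le> 1" "(adj G ^^ j) z1 z2" using relpowp_between_ends[OF wf e B(1,2)] by blast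
      then have "(adj G ^^ (n1 + j + n2)) s t" using B(3,4) \<open>contract_map G e t = t\<close>
        by (metis relpowp_trans)
      then show ?thesis using \<open>j \<le> 1\<close> B(5) by (intro exI[of _ "n1 + j + n2"]) simp
    next
      assume tw: "t = ?w \<and> contract_map G e t = ?u"
      obtain j where "j \<le> 1" "(adj G ^^ j) z1 ?w" using relpowp_between_ends[OF wf e B(1) ends(2)] by blast
      then have "(adj G ^^ (n1 + j)) s t" using B(3) tw by (metis relpowp_trans)
      then show ?thesis using \<open>j \<le> 1\<close> B(5) by (intro exI[of _ "n1 + j"]) simp
    qed
  qed
  then show ?thesis using walk_dist_le le_trans by blast
qed

lemma walk_dist_le_contract_away:
  assumes wf: "wf_graph G" and e: "e \<in> edges G"
    and away: "\<not> reach G s (lost_end G e)" and st: "reach G s t"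
  shows "walk_dist G s t \<le> walk_dist (contract G e) s t"
proof -
  let ?w = "lost_end G e" and ?n = "walk_dist (contract G e) s t"
  have "contract_map G e s = s" "contract_map G e t = t"
    using away st unfolding contract_map_def by auto
  then have walk: "(adj (contract G e) ^^ ?n) (contract_map G e s) t"
    using relpowp_walk_dist reach_contract_mapI[OF wf e st] by simp
  have reach_w: "reach G s ?w" if "z \<in> ends G e" "reach G s z" for z
    using that ends_kept_lost[OF wf e] adj_kept_lost[OF wf e] by auto
  have "\<exists>m\<le>?n. (adj G ^^ m) s t"
    using contract_walk_lift[OF wf e walk]
  proof (elim disjE exE conjE)
    fix n1 n2 z1 z2 assume "z1 \<in> ends G e" "(adj G ^^ n1) s z1"
    then show ?thesis using away reach_w relpowp_imp_rtranclp by metis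
  qed blast
  then show ?thesis using walk_dist_le le_trans by blast
qed

lemma del_edge_contract: "e' \<noteq> e \<Longrightarrow> del_edge (contract G e) e' = contract (del_edge G e') e"
  unfolding contract_def Let_def del_edge_def by (simp add: Diff_insert2[symmetric] insert_commute)

lemma forest_contract:
  assumes wf: "wf_graph G" and forest: "forest G" and e: "e \<in> edges G"
  shows "forest (contract G e)"
  unfolding forest_def
proof (intro ballI allI impI notI)
  fix e' a' b' assume e': "e' \<in> edges (contract G e)"
    and ab': "ends (contract G e) e' = {a', b'}" and r: "reach (del_edge (contract G e) e') a' b'"
  let ?G' = "del_edge G e'" and ?m = "contract_map G e"
  have e'G: "e' \<in> edges G" "e' \<noteq> e" using e' by auto
  have wf': "wf_graph ?G'" and e_G': "e \<in> edges ?G'" using wf_del_edge[OF wf] e e'G by auto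
  have "contract_map ?G' e x = ?m x" for x
    by (simp add: contract_map_def kept_end_def lost_end_def)
  then have map_reach: "reach ?G' x (?m x)" for x using reach_contract_map[OF wf' e_G'] by metis
  have r': "reach ?G' a' b'"
    using r del_edge_contract[OF e'G(2)] reach_contractD[OF wf' e_G'] by metis
  obtain a b where ab: "ends G e' = {a, b}" using wf e'G unfolding wf_graph_def by (metis card_2_iff)
  then have "{?m a, ?m b} = {a', b'}" using ab' by simp
  then have "reach ?G' (?m a) (?m b)" using r' reach_sym by (auto simp: doubleton_eq_iff)
  then have "reach ?G' a b"
    using map_reach[of a] map_reach[of b] reach_sym rtranclp_trans[of "adj ?G'"] by metis
  then show False using forest e'G ab unfolding forest_def by blast
qed

lemma connected_forest_contract:
  assumes T: "connected_forest T" and e: "e \<in> edges T"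
  shows "connected_forest (contract T e)"
proof -
  have wf: "wf_graph T" and forest: "forest T" and conn: "\<forall>a\<in>verts T. \<forall>b\<in>verts T. reach T a b"
    using T unfolding connected_forest_def by auto
  have "wf_graph (contract T e)"
    using wf_contract[OF wf e] forest_no_parallel[OF wf forest e] by blast
  moreover have "verts (contract T e) \<noteq> {}" using ends_kept_lost[OF wf e] by auto
  moreover have "reach (contract T e) a b" if "a \<in> verts (contract T e)" "b \<in> verts (contract T e)" for a b
  proof -
    have "contract_map T e a = a" "contract_map T e b = b" using that unfolding contract_map_def by auto
    then show ?thesis using reach_contract_mapI[OF wf e, of a b] conn that by auto
  qed
  ultimately show ?thesis using forest_contract[OF wf forest e] unfolding connected_forest_def by blast
qed

lemma elem_minor_contract:
  "wf_graph T \<Longrightarrow> forest T \<Longrightarrow> e \<in> edges T \<Longrightarrow> elem_minor (contract T e) T"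
  unfolding elem_minor_def using forest_no_parallel by blast

section \<open>A lower bound for the spectator floor\<close>

definition component_dist_bound :: "nat \<Rightarrow> nat \<Rightarrow> nat \<Rightarrow> mgraph \<Rightarrow> bool" where
  "component_dist_bound N D v0 G \<longleftrightarrow> v0 \<in> verts G \<and>
     (\<forall>s t. reach G v0 s \<longrightarrow> reach G s t \<longrightarrow> walk_dist G s t + N \<le> card (component G v0) + D)"

lemma component_dist_bound_union:
  assumes fin: "finite (verts G)" and bound: "component_dist_bound N D v0 G"
    and x: "x \<in> verts G" and xy: "reach G x y"
  shows "walk_dist G x y + N \<le> card (component G x \<union> component G v0) + D"
proof (cases "reach G v0 x")
  case True
  then have "component G x = component G v0" by (simp add: component_eq)
  then show ?thesis using bound True xy unfolding component_dist_bound_def by simp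
next
  case False
  have v0: "v0 \<in> verts G" using bound unfolding component_dist_bound_def by blast
  have "N \<le> card (component G v0) + D"
    using bound walk_dist_self[of G v0] unfolding component_dist_bound_def by fastforce
  moreover have "walk_dist G x y < card (component G x)"
    using walk_dist_less_card_component[OF fin x xy] .
  moreover have "card (component G x \<union> component G v0) = card (component G x) + card (component G v0)"
    using False reach_sym component_disjoint finite_component[OF fin] x v0
    by (metis card_Un_disjoint)
  ultimately show ?thesis by simp
qed

lemma card_add_le_of_disjoint:
  assumes "finite K" "A \<subseteq> K" "B \<subseteq> K" "A \<inter> B = {}"
  shows "card A + card B \<le> card K"
proof -
  have "card A + card B = card (A \<union> B)"
    using assms by (metis card_Un_disjoint finite_subset)
  also have "\<dots> \<le> card K" using assms by (intro card_mono) auto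
  finally show ?thesis .
qed

lemma walk_dist_across_del_edge:
  assumes wf: "wf_graph G" and e: "e \<in> edges G"
    and st: "reach G s t" and split: "\<not> reach (del_edge G e) s t"
  obtains p q where "{p, q} = ends G e" "reach (del_edge G e) s p" "reach (del_edge G e) q t"
    "walk_dist G s t \<le> walk_dist (del_edge G e) s p + 1 + walk_dist (del_edge G e) q t"
proof -
  let ?H = "del_edge G e"
  obtain p q where pq: "{p, q} = ends G e" "reach ?H s p" "reach ?H q t"
    using reach_del_edge_cases[OF st] split by blast
  have "adj G p q" using wf e pq(1) unfolding wf_graph_def adj_def by auto
  then have "(adj G ^^ (walk_dist ?H s p + 1 + walk_dist ?H q t)) s t"
    using relpowp_del_edgeD[OF relpowp_walk_dist[OF pq(2)]]
      relpowp_del_edgeD[OF relpowp_walk_dist[OF pq(3)]]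
    by (metis relpowp_Suc_I relpowp_trans Suc_eq_plus1)
  then show ?thesis using that pq walk_dist_le by blast
qed

lemma component_dist_bound_del_edge:
  assumes wf: "wf_graph G" and e: "e \<in> edges G"
    and bound: "component_dist_bound N D v0 (del_edge G e)"
  shows "component_dist_bound N D v0 G"
  unfolding component_dist_bound_def
proof (intro conjI allI impI)
  let ?H = "del_edge G e" and ?K = "component G v0" and ?K' = "component (del_edge G e) v0"
  have fin: "finite (verts G)" using wf unfolding wf_graph_def by blast
  show v0: "v0 \<in> verts G" using bound unfolding component_dist_bound_def by simp
  have finK: "finite ?K" by (rule finite_component[OF fin v0])
  have in_K: "component ?H x \<subseteq> ?K" if "reach G v0 x" for x
    using that reach_del_edgeD rtranclp_trans[of "adj G"] unfolding component_def by blast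
  have union_bound: "walk_dist ?H x y + N \<le> card (component ?H x \<union> ?K') + D"
    if "reach G v0 x" "reach ?H x y" for x y
    using component_dist_bound_union[OF _ bound] fin reach_in_verts[OF that(1) v0] that(2) by simp
  fix s t assume s: "reach G v0 s" and st: "reach G s t"
  have t: "reach G v0 t" using s st by simp
  show "walk_dist G s t + N \<le> card ?K + D"
  proof (cases "reach ?H s t")
    case True
    have "walk_dist G s t \<le> walk_dist ?H s t"
      using walk_dist_le relpowp_del_edgeD relpowp_walk_dist[OF True] by blast
    moreover have "card (component ?H s \<union> ?K') \<le> card ?K"
      using in_K[OF s] in_K[of v0] finK by (simp add: card_mono)
    ultimately show ?thesis using union_bound[OF s True] by simp
  next
    case False
    obtain p q where pq: "reach ?H s p" "reach ?H q t"
      and dist: "walk_dist G s t \<le> walk_dist ?H s p + 1 + walk_dist ?H q t"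
      using walk_dist_across_del_edge[OF wf e st False] by blast
    have disj: "component ?H s \<inter> component ?H t = {}" using component_disjoint[OF False] .
    have card_less: "walk_dist ?H x y < card (component ?H x)" if "reach G v0 x" "reach ?H x y" for x y
      using walk_dist_less_card_component[of ?H x y] fin reach_in_verts[OF that(1) v0] that(2) by simp
    show ?thesis
    proof (cases "reach ?H v0 t")
      case False
      then have "component ?H t \<inter> (component ?H s \<union> ?K') = {}"
        using disj component_disjoint reach_sym by blast
      then have "card (component ?H s \<union> ?K') + card (component ?H t) \<le> card ?K"
        using in_K[OF s] in_K[OF t] in_K[of v0] finK
        by (intro card_add_le_of_disjoint) auto
      moreover have "walk_dist ?H t q < card (component ?H t)"
        using card_less[OF t] pq(2) reach_sym by blast
      ultimately show ?thesis using dist union_bound[OF s pq(1)] by (simp add: walk_dist_sym)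
    next
      case True
      then have K': "component ?H t = ?K'" by (simp add: component_eq)
      then have "component ?H s \<inter> ?K' = {}" using disj by simp
      then have "card (component ?H s) + card ?K' \<le> card ?K"
        using in_K[OF s] in_K[of v0] finK by (intro card_add_le_of_disjoint) auto
      moreover have "reach ?H t q" using pq(2) reach_sym by blast
      then have "walk_dist ?H t q + N \<le> card ?K' + D" using union_bound[OF t] K' by simp
      ultimately show ?thesis using dist card_less[OF s pq(1)] by (simp add: walk_dist_sym)
    qed
  qed
qed

lemma component_dist_bound_contract:
  assumes wf: "wf_graph G" and e: "e \<in> edges G"
    and bound: "component_dist_bound N D v0 (contract G e)"
  shows "component_dist_bound N D v0 G"
  unfolding component_dist_bound_def
proof (intro conjI allI impI)
  let ?C = "contract G e" and ?K = "component G v0" and ?K' = "component (contract G e) v0"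
    and ?w = "lost_end G e" and ?m = "contract_map G e"
  have fin: "finite (verts G)" using wf unfolding wf_graph_def by blast
  have v0C: "v0 \<in> verts ?C" using bound unfolding component_dist_bound_def by simp
  then show v0: "v0 \<in> verts G" by simp
  have finK: "finite ?K" by (rule finite_component[OF fin v0])
  have K'_sub: "?K' \<subseteq> ?K" using reach_contractD[OF wf e] unfolding component_def by blast
  have "?w \<notin> ?K'" using component_subset_verts[OF v0C] by auto
  fix s t assume s: "reach G v0 s" and st: "reach G s t"
  have "?m v0 = v0" using v0C unfolding contract_map_def by simp
  then have "reach ?C v0 (?m s)" "reach ?C (?m s) (?m t)"
    using reach_contract_mapI[OF wf e s] reach_contract_mapI[OF wf e st] by simp_all
  then have IH: "walk_dist ?C (?m s) (?m t) + N \<le> card ?K' + D"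
    using bound unfolding component_dist_bound_def by blast
  show "walk_dist G s t + N \<le> card ?K + D"
  proof (cases "?w \<in> ?K")
    case True
    then have "?K' \<subset> ?K" using K'_sub \<open>?w \<notin> ?K'\<close> by blast
    then have "card ?K' < card ?K" using finK by (rule psubset_card_mono[rotated])
    moreover have "walk_dist G s t \<le> walk_dist ?C (?m s) (?m t) + 1"
      using walk_dist_le_contract[OF wf e reach_in_verts[OF s v0] st] .
    ultimately show ?thesis using IH by simp
  next
    case False
    then have away: "\<not> reach G s ?w" using s rtranclp_trans[of "adj G"] unfolding component_def by blast
    then have "?m s = s" "?m t = t" using st unfolding contract_map_def by auto
    moreover have "walk_dist G s t \<le> walk_dist ?C s t"
      using walk_dist_le_contract_away[OF wf e away st] .
    moreover have "card ?K' \<le> card ?K" using K'_sub finK by (rule card_mono[rotated])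
    ultimately show ?thesis using IH by simp
  qed
qed

lemma component_dist_bound_del_vertex:
  assumes isolated: "\<forall>e\<in>edges G. v \<notin> ends G e"
    and bound: "component_dist_bound N D v0 (del_vertex G v)"
  shows "component_dist_bound N D v0 G"
proof -
  have "adj (del_vertex G v) = adj G"
    using isolated unfolding adj_def del_vertex_def by (intro ext) auto
  then have "walk_dist (del_vertex G v) = walk_dist G" "component (del_vertex G v) = component G"
    unfolding walk_dist_def component_def by simp_all
  then show ?thesis
    using bound \<open>adj (del_vertex G v) = adj G\<close>
    unfolding component_dist_bound_def del_vertex_def by auto
qed

lemma wf_del_vertex: "wf_graph G \<Longrightarrow> \<forall>e\<in>edges G. v \<notin> ends G e \<Longrightarrow> wf_graph (del_vertex G v)"
  unfolding wf_graph_def del_vertex_def by auto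

lemma wf_elem_minor: "wf_graph G \<Longrightarrow> elem_minor H G \<Longrightarrow> wf_graph H"
  unfolding elem_minor_def using wf_del_vertex wf_del_edge wf_contract by metis

lemma component_dist_bound_elem_minor:
  "wf_graph G \<Longrightarrow> elem_minor H G \<Longrightarrow> component_dist_bound N D v0 H \<Longrightarrow>
    component_dist_bound N D v0 G"
  unfolding elem_minor_def
  using component_dist_bound_del_vertex component_dist_bound_del_edge component_dist_bound_contract
  by blast

lemma component_dist_bound_minor_chain:
  assumes chain: "elem_minor\<^sup>*\<^sup>* M H" and wf: "wf_graph H"
    and bound: "component_dist_bound N D v0 M"
  shows "component_dist_bound N D v0 H"
  using chain wf
proof (induction rule: rtranclp_induct)
  case base
  show ?case using bound by simp
next
  case (step G H)
  then show ?case using wf_elem_minor component_dist_bound_elem_minor by blast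
qed

lemma relpowp_graph_iso:
  assumes f: "bij_betw f (verts X) (verts M)" and g: "bij_betw g (edges X) (edges M)"
    and ends: "\<forall>e\<in>edges X. ends M (g e) = f ` ends X e"
  shows "(adj X ^^ n) a b \<Longrightarrow> (adj M ^^ n) (f a) (f b)"
proof (induction n arbitrary: b)
  case 0
  then show ?case by simp
next
  case (Suc n)
  then obtain z where "(adj X ^^ n) a z" and zb: "adj X z b" by (auto elim: relpowp_Suc_E)
  from zb obtain e where e: "e \<in> edges X" "ends X e = {z, b}" "z \<in> verts X" "b \<in> verts X"
    unfolding adj_def by auto
  have "g e \<in> edges M" "ends M (g e) = {f z, f b}" "f z \<in> verts M" "f b \<in> verts M"
    using e ends bij_betw_apply[OF f] bij_betw_apply[OF g] by auto
  then have "adj M (f z) (f b)" unfolding adj_def by blast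
  then show ?case using Suc.IH \<open>(adj X ^^ n) a z\<close> by (auto intro: relpowp_Suc_I)
qed

lemma component_dist_bound_iso:
  assumes iso: "graph_iso X M" and wf: "wf_graph X" and x0: "x0 \<in> verts X"
    and conn: "\<forall>a\<in>verts X. \<forall>b\<in>verts X. reach X a b"
  shows "\<exists>v0. component_dist_bound (card (verts X)) (diameter X) v0 M"
proof -
  obtain f g where f: "bij_betw f (verts X) (verts M)" and g: "bij_betw g (edges X) (edges M)"
    and ends: "\<forall>e\<in>edges X. ends M (g e) = f ` ends X e"
    using iso unfolding graph_iso_def by blast
  have fin: "finite (verts X)" using wf unfolding wf_graph_def by blast
  have onto: "verts M = f ` verts X" using bij_betw_imp_surj_on[OF f] by simp
  have image_walk: "reach M (f a) (f b) \<and> walk_dist M (f a) (f b) \<le> diameter X"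
    if "a \<in> verts X" "b \<in> verts X" for a b
  proof -
    have "(adj X ^^ walk_dist X a b) a b" using conn that relpowp_walk_dist by blast
    then have walk: "(adj M ^^ walk_dist X a b) (f a) (f b)" by (rule relpowp_graph_iso[OF f g ends])
    have "walk_dist M (f a) (f b) \<le> walk_dist X a b" using walk by (rule walk_dist_le)
    also have "\<dots> \<le> diameter X" using walk_dist_le_diameter[OF fin that] .
    finally show ?thesis using relpowp_imp_rtranclp[OF walk] by simp
  qed
  have v0: "f x0 \<in> verts M" using onto x0 by simp
  have "component M (f x0) = verts M"
  proof
    show "verts M \<subseteq> component M (f x0)"
      using onto image_walk x0 unfolding component_def by auto
  qed (rule component_subset_verts[OF v0])
  moreover have "walk_dist M s t \<le> diameter X" if "s \<in> verts M" "t \<in> verts M" for s t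
    using that onto image_walk by auto
  moreover have "card (verts M) = card (verts X)" using bij_betw_same_card[OF f] by simp
  ultimately have "component_dist_bound (card (verts X)) (diameter X) (f x0) M"
    unfolding component_dist_bound_def using v0 reach_in_verts[OF _ v0] by (simp add: reach_in_verts)
  then show ?thesis by blast
qed

lemma sp_lower_bound:
  assumes wf: "wf_graph H" and bound: "component_dist_bound N D v0 H"
  shows "N \<le> sp H + D + 1"
proof -
  have fin: "finite (verts H)" using wf unfolding wf_graph_def by blast
  have v0: "v0 \<in> verts H" using bound unfolding component_dist_bound_def by blast
  obtain vs es where U: "unique_shortest_path H vs es" and len: "usp H = length vs"
    using usp_attained[OF fin v0] by blast
  let ?s = "hd vs" and ?t = "last vs"
  have p: "is_path H vs es" using U unfolding unique_shortest_path_def by blast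
  have s: "?s \<in> verts H" using p unfolding is_path_def by auto
  have st: "reach H ?s ?t" by (rule path_reach_last[OF p])
  obtain vs' es' where p': "path_between H ?s ?t vs' es'" "length es' \<le> walk_dist H ?s ?t"
    using walk_imp_path[OF s relpowp_walk_dist[OF st]] by blast
  have "length vs \<le> length vs'" using U p'(1) unfolding unique_shortest_path_def by blast
  moreover have "length vs' = length es' + 1"
    using p'(1) unfolding path_between_def is_path_def by simp
  ultimately have "usp H \<le> walk_dist H ?s ?t + 1" using len p'(2) by simp
  moreover have "walk_dist H ?s ?t + N \<le> card (component H ?s \<union> component H v0) + D"
    by (rule component_dist_bound_union[OF fin bound s st])
  moreover have "card (component H ?s \<union> component H v0) \<le> card (verts H)"
    using component_subset_verts[OF s] component_subset_verts[OF v0] fin by (intro card_mono) auto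
  moreover have "usp H \<le> card (verts H)" by (rule usp_le_card[OF fin])
  ultimately show ?thesis unfolding sp_def by linarith
qed

lemma graph_iso_refl: "graph_iso G G"
  unfolding graph_iso_def by (intro exI[of _ id]) (simp add: bij_betw_id)

lemma is_minor_of_chain: "elem_minor\<^sup>*\<^sup>* G H \<Longrightarrow> is_minor G H"
  unfolding is_minor_def using graph_iso_refl by blast

lemma is_minor_refl: "is_minor G G"
  by (rule is_minor_of_chain[OF rtranclp.rtrancl_refl])

lemma spfloor_le_sp: "wf_graph H \<Longrightarrow> is_minor G H \<Longrightarrow> spfloor G \<le> sp H"
  unfolding spfloor_def by (rule Least_le) blast

lemma card_le_spfloor_diameter:
  assumes wf: "wf_graph X" and ne: "verts X \<noteq> {}"
    and conn: "\<forall>a\<in>verts X. \<forall>b\<in>verts X. reach X a b"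
  shows "card (verts X) \<le> spfloor X + diameter X + 1"
proof -
  have "\<exists>H. wf_graph H \<and> is_minor X H \<and> sp H = spfloor X"
    unfolding spfloor_def by (rule LeastI_ex) (use wf is_minor_refl[of X] in blast)
  then obtain H where H: "wf_graph H" "is_minor X H" "sp H = spfloor X" by blast
  then obtain M where M: "graph_iso X M" "elem_minor\<^sup>*\<^sup>* M H" unfolding is_minor_def by blast
  obtain v0 where "component_dist_bound (card (verts X)) (diameter X) v0 M"
    using component_dist_bound_iso[OF M(1) wf _ conn] ne by blast
  then have "component_dist_bound (card (verts X)) (diameter X) v0 H"
    using component_dist_bound_minor_chain[OF M(2) H(1)] by blast
  then show ?thesis using sp_lower_bound[OF H(1)] H(3) by fastforce
qed

lemma sp_connected_forest:
  assumes "connected_forest T"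
  shows "sp T + diameter T + 1 \<le> card (verts T)"
proof -
  have "finite (verts T)" using assms unfolding connected_forest_def wf_graph_def by blast
  then have "usp T \<le> card (verts T)" by (rule usp_le_card)
  then show ?thesis using connected_forest_diameter_less_usp[OF assms] unfolding sp_def by linarith
qed

lemma spfloor_connected_forest:
  assumes T: "connected_forest T"
  shows "spfloor T + diameter T + 1 = card (verts T)"
proof -
  have wf: "wf_graph T" using T unfolding connected_forest_def by blast
  have "spfloor T \<le> sp T" by (rule spfloor_le_sp[OF wf is_minor_refl])
  moreover have "card (verts T) \<le> spfloor T + diameter T + 1"
    using card_le_spfloor_diameter T unfolding connected_forest_def by blast
  ultimately show ?thesis using sp_connected_forest[OF T] by linarith
qed

section \<open>Deleting an edge of a tree\<close>

definition comp_diam :: "mgraph \<Rightarrow> nat \<Rightarrow> nat" where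
  "comp_diam G x = Max ((\<lambda>(y, z). walk_dist G y z) ` (component G x \<times> component G x))"

lemma walk_dist_le_comp_diam:
  assumes "finite (verts G)" "x \<in> verts G" "y \<in> component G x" "z \<in> component G x"
  shows "walk_dist G y z \<le> comp_diam G x"
proof -
  have "walk_dist G y z \<in> (\<lambda>(y, z). walk_dist G y z) ` (component G x \<times> component G x)"
    using assms(3,4) by (intro image_eqI[of _ _ "(y, z)"]) auto
  then show ?thesis
    unfolding comp_diam_def using finite_component[OF assms(1,2)] by (intro Max_ge) auto
qed

lemma comp_diam_attained:
  assumes "finite (verts G)" "x \<in> verts G"
  obtains y z where "y \<in> component G x" "z \<in> component G x" "comp_diam G x = walk_dist G y z"
proof -
  let ?D = "(\<lambda>(y, z). walk_dist G y z) ` (component G x \<times> component G x)"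
  have "x \<in> component G x" unfolding component_def by simp
  then have "comp_diam G x \<in> ?D"
    unfolding comp_diam_def using finite_component[OF assms] by (intro Max_in) auto
  then obtain p where "p \<in> component G x \<times> component G x"
    "comp_diam G x = (\<lambda>(y, z). walk_dist G y z) p" by blast
  then show ?thesis using that by (cases p) auto
qed

lemma del_edge_components_cover:
  assumes wf: "wf_graph G" and e: "e \<in> edges G"
    and conn: "\<forall>a\<in>verts G. \<forall>b\<in>verts G. reach G a b" and z: "z \<in> verts G"
  obtains y where "y \<in> ends G e" "z \<in> component (del_edge G e) y"
proof -
  let ?H = "del_edge G e" and ?u = "kept_end G e"
  have u: "?u \<in> ends G e" "?u \<in> verts G" using ends_kept_lost[OF wf e] by auto
  show ?thesis
  proof (cases "reach ?H ?u z")
    case True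
    then show ?thesis using that u unfolding component_def by blast
  next
    case False
    have "reach G ?u z" using conn u z by blast
    then obtain p q where "{p, q} = ends G e" "reach ?H ?u p" "reach ?H q z"
      "walk_dist G ?u z \<le> walk_dist ?H ?u p + 1 + walk_dist ?H q z"
      by (rule walk_dist_across_del_edge[OF wf e _ False])
    then have "q \<in> ends G e" "z \<in> component ?H q" unfolding component_def by auto
    then show ?thesis by (rule that)
  qed
qed

lemma walk_contract_within_component:
  assumes wf: "wf_graph G" and e: "e \<in> edges G" and z: "z \<in> ends G e"
    and xy: "x \<in> component (del_edge G e) z" "y \<in> component (del_edge G e) z"
  shows "\<exists>n\<le>comp_diam (del_edge G e) z.
    (adj (contract G e) ^^ n) (contract_map G e x) (contract_map G e y)"
proof -
  let ?H = "del_edge G e"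
  have "reach ?H x y" using xy reach_sym rtranclp_trans[of "adj ?H"] unfolding component_def by blast
  then have "(adj G ^^ walk_dist ?H x y) x y" by (rule relpowp_del_edgeD[OF relpowp_walk_dist])
  then obtain n where n: "n \<le> walk_dist ?H x y"
    "(adj (contract G e) ^^ n) (contract_map G e x) (contract_map G e y)"
    using relpowp_contract_map[OF wf e] by blast
  moreover have "z \<in> verts ?H" "finite (verts ?H)"
    using wf e z unfolding wf_graph_def by auto
  then have "walk_dist ?H x y \<le> comp_diam ?H z" using walk_dist_le_comp_diam xy by blast
  ultimately show ?thesis by (intro exI[of _ n]) simp
qed

lemma diameter_contract_le_comp_diams:
  assumes wf: "wf_graph G" and e: "e \<in> edges G"
    and conn: "\<forall>a\<in>verts G. \<forall>b\<in>verts G. reach G a b"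
  shows "diameter (contract G e) \<le>
    comp_diam (del_edge G e) (kept_end G e) + comp_diam (del_edge G e) (lost_end G e)"
proof -
  let ?H = "del_edge G e" and ?C = "contract G e" and ?m = "contract_map G e"
    and ?u = "kept_end G e" and ?w = "lost_end G e"
  have ends: "ends G e = {?u, ?w}" "?u \<in> verts G" "?w \<in> verts G" using ends_kept_lost[OF wf e] by auto
  note near = walk_contract_within_component[OF wf e]
  have end_map: "?m z = ?u" if "z \<in> ends G e" for z using that ends unfolding contract_map_def by auto
  show ?thesis
  proof (rule diameter_le)
    show "verts ?C \<noteq> {}" using ends_kept_lost[OF wf e] by auto
    fix p q assume pq: "p \<in> verts ?C" "q \<in> verts ?C"
    then have fixed: "?m p = p" "?m q = q" unfolding contract_map_def by auto
    have "p \<in> verts G" "q \<in> verts G" using pq by auto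
    obtain zp where zp: "zp \<in> ends G e" "p \<in> component ?H zp"
      by (rule del_edge_components_cover[OF wf e conn \<open>p \<in> verts G\<close>])
    obtain zq where zq: "zq \<in> ends G e" "q \<in> component ?H zq"
      by (rule del_edge_components_cover[OF wf e conn \<open>q \<in> verts G\<close>])
    have self: "z \<in> component ?H z" for z unfolding component_def by simp
    have "\<exists>n\<le>comp_diam ?H ?u + comp_diam ?H ?w. (adj ?C ^^ n) p q"
    proof (cases "zp = zq")
      case True
      have "\<exists>n\<le>comp_diam ?H zp. (adj ?C ^^ n) (?m p) (?m q)"
        using near[OF zp(1) zp(2)] zq(2) True by simp
      then obtain n where "n \<le> comp_diam ?H zp" "(adj ?C ^^ n) p q" using fixed by auto
      moreover have "comp_diam ?H zp \<le> comp_diam ?H ?u + comp_diam ?H ?w" using zp(1) ends by auto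
      ultimately show ?thesis by (intro exI[of _ n]) simp
    next
      case False
      then have "comp_diam ?H zp + comp_diam ?H zq = comp_diam ?H ?u + comp_diam ?H ?w"
        using zp(1) zq(1) ends by auto
      moreover obtain n1 where "n1 \<le> comp_diam ?H zp" "(adj ?C ^^ n1) p ?u"
        using near[OF zp(1) zp(2) self] fixed end_map[OF zp(1)] by auto
      moreover obtain n2 where "n2 \<le> comp_diam ?H zq" "(adj ?C ^^ n2) ?u q"
        using near[OF zq(1) self zq(2)] fixed end_map[OF zq(1)] by auto
      ultimately show ?thesis by (intro exI[of _ "n1 + n2"] conjI relpowp_trans) auto
    qed
    then obtain n where n: "n \<le> comp_diam ?H ?u + comp_diam ?H ?w" "(adj ?C ^^ n) p q" by blast
    then show "walk_dist ?C p q \<le> comp_diam ?H ?u + comp_diam ?H ?w"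
      using walk_dist_le[OF n(2)] by simp
  qed
qed

definition reattach :: "mgraph \<Rightarrow> nat \<Rightarrow> nat \<Rightarrow> nat \<Rightarrow> mgraph" where
  "reattach G e a b = G\<lparr>ends := (ends G)(e := {a, b})\<rparr>"

lemma reattach_simps [simp]:
  "verts (reattach G e a b) = verts G" "edges (reattach G e a b) = edges G"
  "ends (reattach G e a b) e = {a, b}" "x \<noteq> e \<Longrightarrow> ends (reattach G e a b) x = ends G x"
  unfolding reattach_def by simp_all

lemma wf_reattach:
  "wf_graph G \<Longrightarrow> a \<in> verts G \<Longrightarrow> b \<in> verts G \<Longrightarrow> a \<noteq> b \<Longrightarrow> wf_graph (reattach G e a b)"
  unfolding wf_graph_def reattach_def by auto

lemma path_del_edge_reattach:
  "is_path (del_edge (reattach G e a b) e) vs es \<longleftrightarrow> is_path (del_edge G e) vs es"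
  unfolding is_path_def by auto

lemma is_minor_del_edge_reattach:
  assumes "e \<in> edges G"
  shows "is_minor (del_edge G e) (reattach G e a b)"
proof -
  have "elem_minor (del_edge (reattach G e a b) e) (reattach G e a b)"
    unfolding elem_minor_def using assms by auto
  moreover have "graph_iso (del_edge G e) (del_edge (reattach G e a b) e)"
    unfolding graph_iso_def by (intro exI[of _ id]) (auto simp: bij_betw_id)
  ultimately show ?thesis unfolding is_minor_def by blast
qed

lemma reattach_unique_path:
  assumes forest: "forest G" and e: "e \<in> edges G"
    and p1: "path_between (del_edge G e) x a vs1 es1"
    and p2: "path_between (del_edge G e) b y vs2 es2"
    and apart: "\<not> reach (del_edge G e) x b"
  shows "unique_shortest_path (reattach G e a b) (vs1 @ vs2) (es1 @ e # es2)"
proof -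
  let ?H = "reattach G e a b" and ?G' = "del_edge G e"
  have H_path: "is_path ?H vs es" if "is_path ?G' vs es" for vs es
    using that path_del_edge_reattach path_del_edge_iff by metis
  have G_path: "is_path G vs es" if "is_path ?G' vs es" for vs es
    using that path_del_edge_iff by metis
  have q1: "is_path ?G' vs1 es1" "hd vs1 = x" "last vs1 = a"
    and q2: "is_path ?G' vs2 es2" "hd vs2 = b" "last vs2 = y"
    using p1 p2 unfolding path_between_def by auto
  have "set vs1 \<subseteq> component ?G' x" "set vs2 \<subseteq> component ?G' b"
    using path_reach q1 q2 unfolding component_def by blast+
  then have disj: "set vs1 \<inter> set vs2 = {}" using component_disjoint[OF apart] by blast
  have path: "is_path ?H (vs1 @ vs2) (es1 @ e # es2)"
    using path_append[OF H_path[OF q1(1)] H_path[OF q2(1)] disj] e q1 q2 by simp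
  have ends: "hd (vs1 @ vs2) = x" "last (vs1 @ vs2) = y"
    using q1 q2 path unfolding is_path_def by auto
  show ?thesis
  proof (rule unique_path_imp_usp[OF path])
    fix vs es assume "path_between ?H (hd (vs1 @ vs2)) (last (vs1 @ vs2)) vs es"
    then have r: "is_path ?H vs es" "hd vs = x" "last vs = y" using ends unfolding path_between_def by auto
    have "e \<in> set es"
    proof (rule ccontr)
      assume "e \<notin> set es"
      then have "reach ?G' x y"
        using path_reach_last r path_del_edge_iff path_del_edge_reattach by metis
      moreover have "reach ?G' b y" using path_reach_last q2 by metis
      ultimately show False using apart reach_sym rtranclp_trans[of "adj ?G'"] by metis
    qed
    then obtain i where i: "i < length es" "es ! i = e" by (auto simp: in_set_conv_nth)
    let ?A = "take (Suc i) vs" and ?B = "drop (Suc i) vs"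
    note split = path_split_at_edge[OF r(1) i(1), unfolded i(2) path_del_edge_reattach]
    have "hd ?A = x" "last ?B = y" using r i(1) unfolding is_path_def by auto
    then have "reach ?G' x (last ?A)" using path_reach_last[OF split(1)] by simp
    then have "last ?A \<noteq> b" using apart by blast
    then have AB: "last ?A = a" "hd ?B = b" using split(3) by (auto simp: doubleton_eq_iff)
    have "?A = vs1 \<and> take i es = es1"
      using forest_path_unique[OF forest G_path[OF split(1)] G_path[OF q1(1)]] q1 AB \<open>hd ?A = x\<close>
      by simp
    moreover have "?B = vs2 \<and> drop (Suc i) es = es2"
      using forest_path_unique[OF forest G_path[OF split(2)] G_path[OF q2(1)]] q2 AB \<open>last ?B = y\<close>
      by simp
    moreover have "es = take i es @ e # drop (Suc i) es" using id_take_nth_drop[OF i(1)] i(2) by simp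
    ultimately show "vs = vs1 @ vs2 \<and> es = es1 @ e # es2" by (metis append_take_drop_id)
  qed
qed

lemma reattach_long_usp:
  assumes T: "connected_forest T" and e: "e \<in> edges T"
  obtains a b where "wf_graph (reattach T e a b)"
    "comp_diam (del_edge T e) (kept_end T e) + comp_diam (del_edge T e) (lost_end T e) + 2
      \<le> usp (reattach T e a b)"
proof -
  let ?G' = "del_edge T e" and ?u = "kept_end T e" and ?w = "lost_end T e"
  have wf: "wf_graph T" and forest: "forest T" using T unfolding connected_forest_def by auto
  have fin: "finite (verts ?G')" using wf unfolding wf_graph_def by simp
  have uw: "?u \<in> verts ?G'" "?w \<in> verts ?G'" using ends_kept_lost[OF wf e] by auto
  obtain x a where xa: "x \<in> component ?G' ?u" "a \<in> component ?G' ?u"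
    "comp_diam ?G' ?u = walk_dist ?G' x a"
    by (rule comp_diam_attained[OF fin uw(1)])
  obtain b y where yb: "b \<in> component ?G' ?w" "y \<in> component ?G' ?w"
    "comp_diam ?G' ?w = walk_dist ?G' b y"
    by (rule comp_diam_attained[OF fin uw(2)])
  have "\<not> reach ?G' ?u ?w"
    using forest e ends_kept_lost[OF wf e] unfolding forest_def by blast
  then have disj: "component ?G' ?u \<inter> component ?G' ?w = {}" by (rule component_disjoint)
  have in_comp: "reach ?G' v z" if "v \<in> component ?G' c" "z \<in> component ?G' c" for v z c
    using that reach_sym rtranclp_trans[of "adj ?G'"] unfolding component_def by blast
  have apart: "\<not> reach ?G' x b"
    using xa(1) yb(1) disj rtranclp_trans[of "adj ?G'"] unfolding component_def by blast
  have verts: "x \<in> verts ?G'" "b \<in> verts ?G'" "a \<in> verts T" "b \<in> verts T"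
    using xa yb component_subset_verts[OF uw(1)] component_subset_verts[OF uw(2)] by auto
  obtain vs1 es1 where p1: "path_between ?G' x a vs1 es1"
    using walk_imp_path[OF verts(1) relpowp_walk_dist[OF in_comp[OF xa(1,2)]]] by blast
  obtain vs2 es2 where p2: "path_between ?G' b y vs2 es2"
    using walk_imp_path[OF verts(2) relpowp_walk_dist[OF in_comp[OF yb(1,2)]]] by blast
  let ?H = "reattach T e a b"
  have "a \<noteq> b" using xa(2) yb(1) disj by blast
  then have wfH: "wf_graph ?H" using wf_reattach[OF wf verts(3,4)] by blast
  have finH: "finite (verts ?H)" using wfH unfolding wf_graph_def by blast
  have "length (vs1 @ vs2) \<le> usp ?H"
    using length_le_usp[OF finH reattach_unique_path[OF forest e p1 p2 apart]] .
  moreover have "length (vs1 @ vs2) = length es1 + length es2 + 2"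
    using p1 p2 unfolding path_between_def is_path_def by simp
  moreover have "comp_diam ?G' ?u \<le> length es1" "comp_diam ?G' ?w \<le> length es2"
    using walk_dist_le_path_length[OF p1] walk_dist_le_path_length[OF p2] xa(3) yb(3) by simp_all
  ultimately show ?thesis using that wfH by simp
qed

lemma spfloor_del_edge_le:
  assumes T: "connected_forest T" and e: "e \<in> edges T"
  shows "spfloor (del_edge T e) + comp_diam (del_edge T e) (kept_end T e)
    + comp_diam (del_edge T e) (lost_end T e) + 2 \<le> card (verts T)"
proof -
  obtain a b where wfH: "wf_graph (reattach T e a b)"
    and long: "comp_diam (del_edge T e) (kept_end T e) + comp_diam (del_edge T e) (lost_end T e) + 2
      \<le> usp (reattach T e a b)"
    by (rule reattach_long_usp[OF T e])
  have "spfloor (del_edge T e) \<le> sp (reattach T e a b)"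
    by (rule spfloor_le_sp[OF wfH is_minor_del_edge_reattach[OF e]])
  moreover have "usp (reattach T e a b) \<le> card (verts T)"
    using usp_le_card[of "reattach T e a b"] wfH unfolding wf_graph_def by simp
  ultimately show ?thesis using long unfolding sp_def by simp
qed

section \<open>Elementary minors of a tree\<close>

lemma connected_isolated_vertex:
  assumes conn: "\<forall>a\<in>verts G. \<forall>b\<in>verts G. reach G a b"
    and v: "v \<in> verts G" and isolated: "\<forall>e\<in>edges G. v \<notin> ends G e"
  shows "verts G = {v}"
proof -
  have "x = v" if "x \<in> verts G" for x
  proof -
    have "reach G x v" using conn that v by blast
    then show ?thesis
    proof (cases rule: rtranclp.cases)
      case (rtrancl_into_rtrancl z)
      then show ?thesis using isolated unfolding adj_def by auto
    qed simp
  qed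
  then show ?thesis using v by blast
qed

lemma spfloor_contract_eq:
  assumes T: "connected_forest T" and e: "e \<in> edges T"
    and shorter: "diameter (contract T e) < diameter T"
  shows "spfloor (contract T e) = spfloor T"
proof -
  let ?C = "contract T e"
  have wf: "wf_graph T" and forest: "forest T" using T unfolding connected_forest_def by auto
  have C: "connected_forest ?C" by (rule connected_forest_contract[OF T e])
  have "spfloor ?C + diameter ?C + 1 = card (verts ?C)" by (rule spfloor_connected_forest[OF C])
  moreover have "card (verts ?C) + 1 = card (verts T)" by (rule card_verts_contract[OF wf e])
  moreover have "spfloor ?C \<le> sp T"
    using spfloor_le_sp[OF wf is_minor_of_chain] elem_minor_contract[OF wf forest e] by blast
  moreover have "sp T + diameter T + 1 \<le> card (verts T)" by (rule sp_connected_forest[OF T])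
  moreover have "spfloor T + diameter T + 1 = card (verts T)" by (rule spfloor_connected_forest[OF T])
  ultimately show ?thesis using shorter by linarith
qed

lemma spfloor_elem_minor_less:
  assumes T: "connected_forest T"
    and no_shorter: "\<forall>e\<in>edges T. diameter T \<le> diameter (contract T e)"
    and minor: "elem_minor H T" and nonempty: "verts H \<noteq> {}"
  shows "spfloor H < spfloor T"
proof -
  have wf: "wf_graph T" and forest: "forest T"
    and conn: "\<forall>a\<in>verts T. \<forall>b\<in>verts T. reach T a b"
    using T unfolding connected_forest_def by auto
  have floor: "spfloor T + diameter T + 1 = card (verts T)" by (rule spfloor_connected_forest[OF T])
  from minor consider
      (vertex) v where "v \<in> verts T" "\<forall>e\<in>edges T. v \<notin> ends T e" "H = del_vertex T v"
    | (edge) e where "e \<in> edges T" "H = del_edge T e"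
    | (contract) e where "e \<in> edges T" "H = contract T e"
    unfolding elem_minor_def by blast
  then show ?thesis
  proof cases
    case vertex
    then show ?thesis using connected_isolated_vertex[OF conn] nonempty
      unfolding del_vertex_def by auto
  next
    case (edge e)
    then show ?thesis
      using spfloor_del_edge_le[OF T edge(1)] diameter_contract_le_comp_diams[OF wf edge(1) conn]
        no_shorter floor by fastforce
  next
    case (contract e)
    let ?C = "contract T e"
    have C: "connected_forest ?C" by (rule connected_forest_contract[OF T contract(1)])
    have "spfloor ?C \<le> sp ?C" using C spfloor_le_sp[OF _ is_minor_refl]
      unfolding connected_forest_def by blast
    then show ?thesis
      using sp_connected_forest[OF C] card_verts_contract[OF wf contract(1)] no_shorter contract
        floor by fastforce
  qed
qed

theorem theorem4p3:
  assumes "is_tree T"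
  shows "(\<exists>H. elem_minor H T \<and> verts H \<noteq> {} \<and> spfloor H = spfloor T) \<longleftrightarrow>
         (\<exists>e\<in>edges T. diameter (contract T e) < diameter T)"
proof -
  have T: "connected_forest T" using assms by (rule is_tree_imp_connected_forest)
  show ?thesis
  proof
    assume "\<exists>H. elem_minor H T \<and> verts H \<noteq> {} \<and> spfloor H = spfloor T"
    then obtain H where H: "elem_minor H T" "verts H \<noteq> {}" "spfloor H = spfloor T" by blast
    show "\<exists>e\<in>edges T. diameter (contract T e) < diameter T"
    proof (rule ccontr)
      assume "\<not> (\<exists>e\<in>edges T. diameter (contract T e) < diameter T)"
      then have "\<forall>e\<in>edges T. diameter T \<le> diameter (contract T e)" by (auto simp: not_less)
      then show False using spfloor_elem_minor_less[OF T _ H(1,2)] H(3) by simp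
    qed
  next
    assume "\<exists>e\<in>edges T. diameter (contract T e) < diameter T"
    then obtain e where e: "e \<in> edges T" "diameter (contract T e) < diameter T" by blast
    have "elem_minor (contract T e) T" "verts (contract T e) \<noteq> {}"
      using elem_minor_contract connected_forest_contract[OF T e(1)] T e(1)
      unfolding connected_forest_def by auto
    then show "\<exists>H. elem_minor H T \<and> verts H \<noteq> {} \<and> spfloor H = spfloor T"
      using spfloor_contract_eq[OF T e] by blast
  qed
qed

end
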